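(* Let $S_1,\dots,S_n\subseteq[N]$ and $k\ge1$. Let $\mathbb F$ be a field of characteristic $2$ with $|\mathbb F|\ge N$, and let $f:[N]\to\mathbb F$ be injective. For $a\in[N]$ set $\chi(a)=(1,f(a),f(a)^2,\dots,f(a)^{k-1})\in\mathbb F^k$. For $S\subseteq[N]$ let $\chi(S)=\bigwedge_{a\in S}\chi(a)\in\Lambda(\mathbb F^k)$, taken in increasing order of $a$, with $\chi(\emptyset)=1$. Let $y_1,\dots,y_n$ be indeterminates. Then there exists $T\subseteq[n]$ such that the sets $S_i$, $i\in T$, are pairwise disjoint and $\left|\bigcup_{i\in T}S_i\right|=k$ if and only if the coefficient of $e_{[k]}$ in $\prod_{i=1}^n(1+y_i\chi(S_i))$ is a nonzero polynomial in $\mathbb F[y_1,\dots,y_n]$.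
   Context: $\Lambda(\mathbb F^k)$ is the exterior algebra with basis $\{e_I:I\subseteq[k]\}$, where $e_I=e_{i_1}\wedge\cdots\wedge e_{i_r}$ for $I=\{i_1<\dots<i_r\}$. A vector $v\in\mathbb F^k$ is identified with $\sum_iv[i]e_i$. The product is taken in $\Lambda(\mathbb F^k)$ with coefficients in the polynomial ring $\mathbb F[y_1,\dots,y_n]$; in characteristic $2$ this algebra is commutative. For an element $x$, $[e_{[k]}]x$ denotes its coefficient on $e_{[k]}=e_1\wedge\cdots\wedge e_k$. *)

theory Defs
  imports Main "HOL-Library.Poly_Mapping"
begin

(* Multivariate polynomials F[y_1,y_2,...]: coefficient functions on monomials
   (exponent vectors nat =>0 nat), with the convolution ring structure from Poly_Mapping. *)
type_synonym 'a mpoly = "(nat \<Rightarrow>\<^sub>0 nat) \<Rightarrow>\<^sub>0 'a"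

definition Const :: "'a::zero \<Rightarrow> 'a mpoly" where
  "Const c = Poly_Mapping.single 0 c"

definition Var :: "nat \<Rightarrow> 'a::{zero,one} mpoly" where
  "Var i = Poly_Mapping.single (Poly_Mapping.single i 1) 1"

(* Exterior algebra Lambda(R^k) over a commutative ring R: an element is the
   coefficient function I \<mapsto> [e_I]x on subsets I of {1..k} (zero outside). *)
definition ext_sign :: "nat set \<Rightarrow> nat set \<Rightarrow> 'r::comm_ring_1" where
  "ext_sign I J = (-1) ^ card {(i,j). i \<in> I \<and> j \<in> J \<and> j < i}"

(* e_I \<and> e_J = ext_sign I J * e_(I \<union> J) if I, J disjoint, else 0 *)
definition ext_mult :: "nat \<Rightarrow> (nat set \<Rightarrow> 'r::comm_ring_1) \<Rightarrow> (nat set \<Rightarrow> 'r) \<Rightarrow> nat set \<Rightarrow> 'r" where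
  "ext_mult k x y K =
     (if K \<subseteq> {1..k} then (\<Sum>I\<in>Pow K. ext_sign I (K - I) * x I * y (K - I)) else 0)"

definition ext_one :: "nat set \<Rightarrow> 'r::comm_ring_1" where
  "ext_one K = (if K = {} then 1 else 0)"

definition ext_add :: "(nat set \<Rightarrow> 'r::comm_ring_1) \<Rightarrow> (nat set \<Rightarrow> 'r) \<Rightarrow> nat set \<Rightarrow> 'r" where
  "ext_add x y K = x K + y K"

definition ext_smult :: "'r::comm_ring_1 \<Rightarrow> (nat set \<Rightarrow> 'r) \<Rightarrow> nat set \<Rightarrow> 'r" where
  "ext_smult c x K = c * x K"

(* the vector v = (v[1],...,v[k]) identified with sum_i v[i] e_i *)
definition ext_vec :: "nat \<Rightarrow> (nat \<Rightarrow> 'r::comm_ring_1) \<Rightarrow> nat set \<Rightarrow> 'r" where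
  "ext_vec k v K = (if \<exists>i\<in>{1..k}. K = {i} then v (THE i. K = {i}) else 0)"

definition ext_wedge_list :: "nat \<Rightarrow> (nat set \<Rightarrow> 'r::comm_ring_1) list \<Rightarrow> nat set \<Rightarrow> 'r" where
  "ext_wedge_list k xs = foldr (ext_mult k) xs ext_one"

definition chi :: "nat \<Rightarrow> (nat \<Rightarrow> 'a::field) \<Rightarrow> nat \<Rightarrow> nat set \<Rightarrow> 'a mpoly" where
  "chi k f a = ext_vec k (\<lambda>i. Const (f a ^ (i - 1)))"

definition chiS :: "nat \<Rightarrow> (nat \<Rightarrow> 'a::field) \<Rightarrow> nat set \<Rightarrow> nat set \<Rightarrow> 'a mpoly" where
  "chiS k f S = ext_wedge_list k (map (chi k f) (sorted_list_of_set S))"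

definition gen_prod :: "nat \<Rightarrow> nat \<Rightarrow> (nat \<Rightarrow> 'a::field) \<Rightarrow> (nat \<Rightarrow> nat set) \<Rightarrow> nat set \<Rightarrow> 'a mpoly" where
  "gen_prod k n f S = ext_wedge_list k
     (map (\<lambda>i. ext_add ext_one (ext_smult (Var i) (chiS k f (S i)))) [1..<n+1])"

end

theory Submission
  imports Defs "HOL-Combinatorics.Multiset_Permutations" "HOL-Combinatorics.Permutations"
    "HOL-Computational_Algebra.Polynomial"
begin

(* In characteristic 2 every sign in the exterior algebra is 1, so the product of Lambda(F^k)
   becomes the subset convolution. Expanding prod (1 + y_i chi(S_i)), the coefficient of the
   squarefree monomial prod_{i in T} y_i is the coefficient of e_[k] in the wedge of the vectors
   chi(a), a running through the S_i with i in T (with repetitions). Such a coefficient is a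
   permanent, i.e. a determinant since char F = 2: it vanishes unless there are exactly k vectors,
   it vanishes if two of them coincide (transposing the two equal rows pairs off the terms), and
   for k distinct points f(a) it is a Vandermonde determinant, hence nonzero. Distinct T give
   distinct monomials, so the polynomial is nonzero iff some T has pairwise disjoint S_i whose
   union has exactly k elements. *)

subsection \<open>Subset convolution\<close>

definition subset_conv :: "(nat set \<Rightarrow> 'r::comm_ring_1) \<Rightarrow> (nat set \<Rightarrow> 'r) \<Rightarrow> nat set \<Rightarrow> 'r" where
  "subset_conv x y K = (\<Sum>I\<in>Pow K. x I * y (K - I))"

definition conv_prod :: "(nat set \<Rightarrow> 'r::comm_ring_1) list \<Rightarrow> nat set \<Rightarrow> 'r" where
  "conv_prod xs = foldr subset_conv xs ext_one"

lemma conv_prod_Nil [simp]: "conv_prod [] = ext_one"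
  by (simp add: conv_prod_def)

lemma conv_prod_Cons [simp]: "conv_prod (x # xs) = subset_conv x (conv_prod xs)"
  by (simp add: conv_prod_def)

lemma subset_conv_one_left:
  assumes "finite K"
  shows "subset_conv ext_one y K = y K"
proof -
  have "subset_conv ext_one y K = (\<Sum>I\<in>Pow K. if I = {} then y K else 0)"
    unfolding subset_conv_def ext_one_def by (rule sum.cong) auto
  also have "\<dots> = y K" using assms by (simp add: sum.delta')
  finally show ?thesis .
qed

lemma subset_conv_cong:
  "(\<And>I. I \<subseteq> K \<Longrightarrow> x I = x' I) \<Longrightarrow> (\<And>I. I \<subseteq> K \<Longrightarrow> y I = y' I) \<Longrightarrow>
   subset_conv x y K = subset_conv x' y' K"
  unfolding subset_conv_def by (rule sum.cong) auto

lemma subset_conv_add_left: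
  "subset_conv (ext_add x x') y K = subset_conv x y K + subset_conv x' y K"
  unfolding subset_conv_def ext_add_def by (simp add: ring_distribs sum.distrib)

lemma subset_conv_smult_left: "subset_conv (ext_smult c x) y K = c * subset_conv x y K"
  unfolding subset_conv_def ext_smult_def by (simp add: sum_distrib_left mult.assoc)

lemma subset_conv_sum_right:
  "subset_conv x (\<lambda>K. \<Sum>a\<in>A. c a * y a K) K = (\<Sum>a\<in>A. c a * subset_conv x (y a) K)"
  unfolding subset_conv_def by (simp add: sum_distrib_left sum.swap[of _ A] mult.left_commute)

lemma subset_conv_assoc:
  assumes K: "finite K"
  shows "subset_conv (subset_conv x y) z K = subset_conv x (subset_conv y z) K"
proof -
  have "subset_conv (subset_conv x y) z K
      = (\<Sum>(I,J)\<in>Sigma (Pow K) Pow. x J * y (I - J) * z (K - I))"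
    unfolding subset_conv_def sum_distrib_right
    by (subst sum.Sigma) (auto intro: finite_subset[OF _ K])
  also have "\<dots> = (\<Sum>(J,I)\<in>Sigma (Pow K) (\<lambda>J. Pow (K - J)). x J * y I * z (K - J - I))"
  proof -
    have "K - J - (I - J) = K - I" if "J \<subseteq> I" for I J using that by blast
    then show ?thesis
      by (intro sum.reindex_bij_witness[where i="\<lambda>(J,I). (I \<union> J, J)" and j="\<lambda>(I,J). (J, I - J)"])
        (auto simp: Diff_Un Un_Diff)
  qed
  also have "\<dots> = subset_conv x (subset_conv y z) K"
    unfolding subset_conv_def sum_distrib_left mult.assoc
    by (subst sum.Sigma) (auto intro: finite_subset[OF _ K])
  finally show ?thesis .
qed

lemma subset_conv_conv_prod_left:
  "finite K \<Longrightarrow> subset_conv (conv_prod xs) y K = foldr subset_conv xs y K"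
proof (induction xs arbitrary: K)
  case Nil
  then show ?case by (simp add: subset_conv_one_left)
next
  case (Cons x xs)
  have "subset_conv (conv_prod (x # xs)) y K = subset_conv x (subset_conv (conv_prod xs) y) K"
    using subset_conv_assoc[OF Cons.prems] by simp
  also have "\<dots> = subset_conv x (foldr subset_conv xs y) K"
    by (rule subset_conv_cong) (auto intro!: Cons.IH finite_subset[OF _ Cons.prems])
  finally show ?case by simp
qed

lemma conv_prod_concat:
  "finite K \<Longrightarrow> conv_prod (map conv_prod xss) K = conv_prod (concat xss) K"
proof (induction xss arbitrary: K)
  case Nil
  then show ?case by simp
next
  case (Cons xs xss)
  have "conv_prod (map conv_prod (xs # xss)) K
      = subset_conv (conv_prod xs) (conv_prod (concat xss)) K"
    by simp (rule subset_conv_cong, auto intro!: Cons.IH finite_subset[OF _ Cons.prems])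
  also have "\<dots> = foldr subset_conv xs (conv_prod (concat xss)) K"
    by (rule subset_conv_conv_prod_left[OF Cons.prems])
  also have "\<dots> = conv_prod (concat (xs # xss)) K"
    by (simp add: conv_prod_def)
  finally show ?case .
qed

subsection \<open>Wedge products of vectors are permanents\<close>

definition vector_elem :: "(nat \<Rightarrow> 'r::comm_ring_1) \<Rightarrow> nat set \<Rightarrow> 'r" where
  "vector_elem w K = (if \<exists>i. K = {i} then w (THE i. K = {i}) else 0)"

lemma vector_elem_singleton [simp]: "vector_elem w {i} = w i"
  unfolding vector_elem_def by auto

lemma subset_conv_vector_elem:
  assumes "finite K"
  shows "subset_conv (vector_elem w) y K = (\<Sum>i\<in>K. w i * y (K - {i}))"
proof -
  have "subset_conv (vector_elem w) y K = (\<Sum>I\<in>(\<lambda>i. {i}) ` K. vector_elem w I * y (K - I))"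
    unfolding subset_conv_def
    by (rule sum.mono_neutral_right) (auto simp: assms vector_elem_def)
  also have "\<dots> = (\<Sum>i\<in>K. w i * y (K - {i}))"
    by (subst sum.reindex) (auto simp: inj_on_def)
  finally show ?thesis .
qed

definition diag_prod :: "(nat \<Rightarrow> 'r::comm_ring_1) list \<Rightarrow> nat list \<Rightarrow> 'r" where
  "diag_prod ws ks = (if length ws = length ks then \<Prod>j<length ws. (ws ! j) (ks ! j) else 0)"

text \<open>The permanent of the matrix with rows \<open>ws\<close> and columns indexed by \<open>K\<close>; it is \<open>0\<close>
  unless the matrix is square.\<close>

definition permanent :: "(nat \<Rightarrow> 'r::comm_ring_1) list \<Rightarrow> nat set \<Rightarrow> 'r" where
  "permanent ws K = (\<Sum>ks\<in>permutations_of_set K. diag_prod ws ks)"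

lemma diag_prod_Cons_Cons [simp]: "diag_prod (w # ws) (k # ks) = w k * diag_prod ws ks"
  unfolding diag_prod_def by (auto simp del: prod.lessThan_Suc simp add: prod.lessThan_Suc_shift)

lemma permanent_eq_0_if_length_neq: "length ws \<noteq> card K \<Longrightarrow> permanent ws K = 0"
  unfolding permanent_def diag_prod_def
  by (auto simp: length_finite_permutations_of_set intro!: sum.neutral)

lemma permanent_Nil:
  assumes "finite K"
  shows "permanent [] K = ext_one K"
proof (cases "K = {}")
  case False
  with assms have "length [] \<noteq> card K" by simp
  with False show ?thesis by (simp add: permanent_eq_0_if_length_neq ext_one_def)
qed (simp add: ext_one_def permanent_def diag_prod_def)

lemma permanent_Cons:
  assumes "finite K" "K \<noteq> {}"
  shows "permanent (w # ws) K = (\<Sum>i\<in>K. w i * permanent ws (K - {i}))"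
proof -
  have "permanent (w # ws) K
      = (\<Sum>i\<in>K. \<Sum>ks\<in>(\<lambda>xs. i # xs) ` permutations_of_set (K - {i}). diag_prod (w # ws) ks)"
    unfolding permanent_def permutations_of_set_nonempty[OF assms(2)]
    by (rule sum.UNION_disjoint) (use assms in auto)
  also have "\<dots> = (\<Sum>i\<in>K. w i * permanent ws (K - {i}))"
    unfolding permanent_def by (rule sum.cong) (simp_all add: sum.reindex sum_distrib_left)
  finally show ?thesis .
qed

lemma conv_prod_vector_elems: "finite K \<Longrightarrow> conv_prod (map vector_elem ws) K = permanent ws K"
proof (induction ws arbitrary: K)
  case Nil
  then show ?case by (simp add: permanent_Nil)
next
  case (Cons w ws)
  show ?case
  proof (cases "K = {}")
    case True
    then show ?thesis by (simp add: subset_conv_def vector_elem_def permanent_def diag_prod_def)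
  next
    case False
    have "conv_prod (map vector_elem (w # ws)) K = (\<Sum>i\<in>K. w i * conv_prod (map vector_elem ws) (K - {i}))"
      using Cons.prems by (simp add: subset_conv_vector_elem)
    also have "\<dots> = permanent (w # ws) K"
      using Cons False by (simp add: permanent_Cons)
    finally show ?thesis .
  qed
qed

lemma permanent_repeated_rows_char2:
  fixes ws :: "(nat \<Rightarrow> 'r::comm_ring_1) list"
  assumes two: "(2::'r) = 0"
    and pq: "p < length ws" "q < length ws" "p \<noteq> q" "ws ! p = ws ! q"
  shows "permanent ws K = 0"
proof (cases "length ws = card K")
  case False
  then show ?thesis by (rule permanent_eq_0_if_length_neq)
next
  case True
  define \<tau> where "\<tau> = Transposition.transpose p q"
  have len: "length ks = length ws" if "ks \<in> permutations_of_set K" for ks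
    using that True by (simp add: length_finite_permutations_of_set)
  have \<tau>: "\<tau> permutes {..<length ks}" if "ks \<in> permutations_of_set K" for ks
    unfolding \<tau>_def len[OF that] using pq by (intro permutes_swap_id) auto
  have ws_\<tau>: "ws ! \<tau> j = ws ! j" for j
    unfolding \<tau>_def using pq(4) by (cases "j = p"; cases "j = q") auto
  show ?thesis
    unfolding permanent_def
  proof (rule sum_involution_eq_0[where h="permute_list \<tau>"])
    fix ks assume ks: "ks \<in> permutations_of_set K"
    have "diag_prod ws (permute_list \<tau> ks) = (\<Prod>j<length ws. (ws ! \<tau> j) (ks ! \<tau> j))"
      unfolding diag_prod_def using len[OF ks] \<tau>[OF ks] by (simp add: permute_list_nth ws_\<tau>)
    also have "\<dots> = diag_prod ws ks"
      unfolding diag_prod_def using len[OF ks] prod.permute[OF \<tau>[OF ks], of "\<lambda>j. (ws ! j) (ks ! j)"]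
      by (simp add: comp_def)
    finally have "diag_prod ws (permute_list \<tau> ks) = diag_prod ws ks" .
    then show "diag_prod ws (permute_list \<tau> ks) + diag_prod ws ks = 0"
      by (metis mult_2 two mult_zero_left)
    show "permute_list \<tau> ks \<in> permutations_of_set K"
      using ks \<tau>[OF ks] by (auto simp: permutations_of_set_def)
    show "permute_list \<tau> (permute_list \<tau> ks) = ks"
      using permute_list_compose[OF \<tau>[OF ks], of \<tau>] by (simp add: \<tau>_def)
    have "permute_list \<tau> ks ! p = ks ! q"
      using \<tau>[OF ks] pq len[OF ks] by (simp add: permute_list_nth \<tau>_def)
    moreover have "ks ! q \<noteq> ks ! p"
      using ks pq len[OF ks] by (auto simp: permutations_of_set_def nth_eq_iff_index_eq)
    ultimately show "permute_list \<tau> ks \<noteq> ks" by metis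
  qed
qed

definition vandermonde_row :: "'a::comm_ring_1 \<Rightarrow> nat \<Rightarrow> 'a" where
  "vandermonde_row x i = x ^ (i - 1)"

text \<open>Expanded along its first row, the permanent is a polynomial in the first point of degree
  at most \<open>m\<close>, whose coefficient of degree \<open>m\<close> is the Vandermonde permanent of the remaining \<open>m\<close>
  points and which vanishes at each of these points.\<close>

lemma permanent_vandermonde_neq_0_char2:
  fixes xs :: "'a::idom list"
  assumes two: "(2::'a) = 0" and "distinct xs"
  shows "permanent (map vandermonde_row xs) {1..length xs} \<noteq> 0"
  using assms(2)
proof (induction xs)
  case Nil
  then show ?case by (simp add: permanent_def diag_prod_def)
next
  case (Cons t xs)
  define m where "m = length xs"
  define c where "c i = permanent (map vandermonde_row xs) ({1..Suc m} - {i})" for i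
  define q where "q = (\<Sum>i\<in>{1..Suc m}. monom (c i) (i - 1))"
  have poly_q: "poly q s = permanent (vandermonde_row s # map vandermonde_row xs) {1..Suc m}" for s
    unfolding q_def c_def by (simp add: permanent_Cons poly_sum poly_monom vandermonde_row_def mult.commute)
  have "coeff q m = (\<Sum>i\<in>{1..Suc m}. if i = Suc m then c i else 0)"
    unfolding q_def coeff_sum coeff_monom by (rule sum.cong) auto
  also have "\<dots> = permanent (map vandermonde_row xs) {1..m}"
    by (simp add: c_def atLeastAtMostSuc_conv)
  finally have "coeff q m \<noteq> 0"
    using Cons by (simp add: m_def)
  then have q: "q \<noteq> 0" by auto
  have "degree q \<le> m"
    unfolding q_def by (intro degree_sum_le order.trans[OF degree_monom_le]) auto
  have roots: "poly q x = 0" if x: "x \<in> set xs" for x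
  proof -
    obtain j where "j < length xs" "xs ! j = x"
      using x by (metis in_set_conv_nth)
    then show ?thesis
      unfolding poly_q by (intro permanent_repeated_rows_char2[OF two, of 0 _ "Suc j"]) (simp_all add: m_def)
  qed
  show ?case
  proof
    assume "permanent (map vandermonde_row (t # xs)) {1..length (t # xs)} = 0"
    then have "insert t (set xs) \<subseteq> {x. poly q x = 0}"
      using roots by (auto simp: poly_q m_def)
    then have "card (insert t (set xs)) \<le> card {x. poly q x = 0}"
      by (rule card_mono[OF poly_roots_finite[OF q]])
    also have "\<dots> \<le> degree q"
      by (rule card_poly_roots_bound[OF q])
    finally show False
      using Cons.prems \<open>degree q \<le> m\<close> by (simp add: m_def distinct_card)
  qed
qed

subsection \<open>The exterior algebra in characteristic 2\<close>

lemma ext_mult_eq_subset_conv: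
  assumes "(-1::'r::comm_ring_1) = 1" and "K \<subseteq> {1..k}"
  shows "ext_mult k x y K = subset_conv x (y :: nat set \<Rightarrow> 'r) K"
  unfolding ext_mult_def subset_conv_def ext_sign_def using assms(2) by (simp add: assms(1))

lemma ext_wedge_list_eq_conv_prod:
  assumes neg: "(-1::'r::comm_ring_1) = 1"
    and agree: "list_all2 (\<lambda>x x'. \<forall>I\<subseteq>{1..k}. x I = (x' I :: 'r)) xs xs'"
    and K: "K \<subseteq> {1..k}"
  shows "ext_wedge_list k xs K = conv_prod xs' K"
  using agree K
proof (induction xs xs' arbitrary: K rule: list_all2_induct)
  case Nil
  then show ?case by (simp add: ext_wedge_list_def)
next
  case (Cons x xs x' xs')
  have "ext_wedge_list k (x # xs) K = subset_conv x (ext_wedge_list k xs) K"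
    using ext_mult_eq_subset_conv[OF neg Cons.prems] by (simp add: ext_wedge_list_def)
  also have "\<dots> = subset_conv x' (conv_prod xs') K"
    by (rule subset_conv_cong) (use Cons in auto)
  finally show ?case by simp
qed

subsection \<open>Expanding a product of factors \<open>1 + y\<^sub>i c\<^sub>i\<close>\<close>

lemma sum_Pow_insert:
  assumes "finite A" "a \<notin> A"
  shows "(\<Sum>T\<in>Pow (insert a A). g T) = (\<Sum>T\<in>Pow A. g T) + (\<Sum>T\<in>Pow A. g (insert a T))"
proof -
  have "(\<Sum>T\<in>Pow (insert a A). g T) = (\<Sum>T\<in>Pow A. g T) + (\<Sum>T\<in>insert a ` Pow A. g T)"
    unfolding Pow_insert by (rule sum.union_disjoint) (use assms in auto)
  also have "(\<Sum>T\<in>insert a ` Pow A. g T) = (\<Sum>T\<in>Pow A. g (insert a T))"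
    by (rule sum.reindex_cong[where l="insert a"]) (use assms in \<open>auto simp: inj_on_def\<close>)
  finally show ?thesis .
qed

lemma conv_prod_one_plus_expand:
  fixes Y :: "nat \<Rightarrow> 'r::comm_ring_1"
  assumes "distinct L" and "finite K"
  shows "conv_prod (map (\<lambda>i. ext_add ext_one (ext_smult (Y i) (C i))) L) K
     = (\<Sum>T\<in>Pow (set L). (\<Prod>i\<in>T. Y i) * conv_prod (map C (filter (\<lambda>i. i \<in> T) L)) K)"
  using assms
proof (induction L arbitrary: K)
  case Nil
  then show ?case by simp
next
  case (Cons a L)
  define P where "P = conv_prod (map (\<lambda>i. ext_add ext_one (ext_smult (Y i) (C i))) L)"
  define F where "F T = conv_prod (map C (filter (\<lambda>i. i \<in> T) L))" for T
  have a: "a \<notin> set L" "distinct L"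
    using Cons.prems by auto
  have P: "P K' = (\<Sum>T\<in>Pow (set L). (\<Prod>i\<in>T. Y i) * F T K')" if "finite K'" for K'
    unfolding P_def F_def using Cons.IH[OF a(2) that] .
  have "subset_conv (C a) P K = subset_conv (C a) (\<lambda>K'. \<Sum>T\<in>Pow (set L). (\<Prod>i\<in>T. Y i) * F T K') K"
    by (rule subset_conv_cong) (auto intro!: P finite_subset[OF _ Cons.prems(2)])
  also have "\<dots> = (\<Sum>T\<in>Pow (set L). (\<Prod>i\<in>T. Y i) * subset_conv (C a) (F T) K)"
    by (rule subset_conv_sum_right)
  finally have CP: "subset_conv (C a) P K = \<dots>" .
  have filter_a: "filter (\<lambda>i. i \<in> T) (a # L) = filter (\<lambda>i. i \<in> T) L"
    and filter_insert_a: "filter (\<lambda>i. i \<in> insert a T) (a # L) = a # filter (\<lambda>i. i \<in> T) L"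
    if "T \<subseteq> set L" for T
    using that a(1) by (auto intro!: filter_cong)
  have prod_insert_a: "(\<Prod>i\<in>insert a T. Y i) = Y a * (\<Prod>i\<in>T. Y i)" if "T \<subseteq> set L" for T
    using that a(1) by (subst prod.insert) (auto dest: finite_subset[OF _ finite_set])
  have "conv_prod (map (\<lambda>i. ext_add ext_one (ext_smult (Y i) (C i))) (a # L)) K
      = P K + Y a * subset_conv (C a) P K"
    using Cons.prems by (simp add: P_def subset_conv_add_left subset_conv_smult_left subset_conv_one_left)
  also have "\<dots> = (\<Sum>T\<in>Pow (set L). (\<Prod>i\<in>T. Y i) * F T K)
      + (\<Sum>T\<in>Pow (set L). (\<Prod>i\<in>insert a T. Y i) * subset_conv (C a) (F T) K)"
    unfolding P[OF Cons.prems(2)] CP sum_distrib_left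
    using a(1) by (intro arg_cong2[where f="(+)"] sum.cong) (auto simp: mult_ac prod_insert_a)
  also have "\<dots> = (\<Sum>T\<in>Pow (set (a # L)). (\<Prod>i\<in>T. Y i) * conv_prod (map C (filter (\<lambda>i. i \<in> T) (a # L))) K)"
    unfolding set_simps sum_Pow_insert[OF finite_set a(1)] F_def
    by (intro arg_cong2[where f="(+)"] sum.cong refl) (simp_all only: filter_a filter_insert_a Pow_iff list.map conv_prod_Cons)
  finally show ?case .
qed

lemma neg_one_mpoly_char2:
  assumes "(2::'a::comm_ring_1) = 0"
  shows "(-1::'a mpoly) = 1"
proof -
  have "(2::'a mpoly) = Poly_Mapping.single 0 2"
    by simp
  also have "\<dots> = 0"
    by (simp add: assms)
  finally have "(1::'a mpoly) + 1 = 0"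
    by (simp add: one_add_one)
  then show ?thesis
    by (metis eq_neg_iff_add_eq_0)
qed

lemma Const_sum: "Const (\<Sum>j\<in>A. g j) = (\<Sum>j\<in>A. Const (g j) :: 'a::comm_ring_1 mpoly)"
  by (induction A rule: infinite_finite_induct) (simp_all add: Const_def single_add)

lemma Const_zero [simp]: "Const 0 = 0"
  by (simp add: Const_def)

lemma Const_mult: "Const (a * b) = (Const a * Const b :: 'a::comm_ring_1 mpoly)"
  unfolding Const_def by (simp add: mult_single)

lemma Const_prod: "Const (\<Prod>j\<in>A. g j) = (\<Prod>j\<in>A. Const (g j) :: 'a::comm_ring_1 mpoly)"
  by (induction A rule: infinite_finite_induct) (simp_all add: Const_mult, simp_all add: Const_def)

lemma permanent_map_Const:
  "permanent (map (\<lambda>a i. Const (g a i)) xs) K = (Const (permanent (map g xs) K) :: 'a::comm_ring_1 mpoly)"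
proof -
  have "diag_prod (map (\<lambda>a i. Const (g a i)) xs) ks = Const (diag_prod (map g xs) ks)" for ks
    unfolding diag_prod_def by (simp add: Const_prod)
  then show ?thesis
    unfolding permanent_def Const_sum by simp
qed

definition subset_monomial :: "nat set \<Rightarrow> nat \<Rightarrow>\<^sub>0 nat" where
  "subset_monomial T = (\<Sum>i\<in>T. Poly_Mapping.single i 1)"

lemma prod_Var_eq_single:
  "finite T \<Longrightarrow> (\<Prod>i\<in>T. Var i :: 'a::comm_ring_1 mpoly) = Poly_Mapping.single (subset_monomial T) 1"
  unfolding subset_monomial_def
  by (induction T rule: finite_induct) (simp_all add: Var_def mult_single add.commute)

lemma inj_on_subset_monomial: "inj_on subset_monomial {T. finite T}"
proof
  have mem: "j \<in> T \<longleftrightarrow> Poly_Mapping.lookup (subset_monomial T) j = 1" if "finite T" for T j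
    using that by (simp add: subset_monomial_def lookup_sum lookup_single when_def)
  fix T T' assume "T \<in> {T. finite T}" "T' \<in> {T. finite T}" "subset_monomial T = subset_monomial T'"
  then show "T = T'"
    by (simp add: set_eq_iff mem)
qed

lemma sum_single_eq_0_iff:
  assumes "finite A" "inj_on m A"
  shows "(\<Sum>a\<in>A. Poly_Mapping.single (m a) (c a)) = 0 \<longleftrightarrow> (\<forall>a\<in>A. c a = 0)"
proof
  assume sum0: "(\<Sum>a\<in>A. Poly_Mapping.single (m a) (c a)) = 0"
  show "\<forall>a\<in>A. c a = 0"
  proof
    fix a assume a: "a \<in> A"
    have "Poly_Mapping.lookup (\<Sum>b\<in>A. Poly_Mapping.single (m b) (c b)) (m a)
        = (\<Sum>b\<in>A. if b = a then c b else 0)"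
      unfolding lookup_sum using a assms(2)
      by (intro sum.cong) (auto simp: lookup_single when_def inj_on_eq_iff)
    then show "c a = 0" using sum0 a assms(1) by simp
  qed
qed simp

subsection \<open>Coefficients of the generating product\<close>

definition members_list :: "(nat \<Rightarrow> nat set) \<Rightarrow> nat \<Rightarrow> nat set \<Rightarrow> nat list" where
  "members_list S n T = concat (map (\<lambda>i. sorted_list_of_set (S i)) (filter (\<lambda>i. i \<in> T) [1..<n+1]))"

definition family_coeff :: "nat \<Rightarrow> nat \<Rightarrow> (nat \<Rightarrow> 'a::field) \<Rightarrow> (nat \<Rightarrow> nat set) \<Rightarrow> nat set \<Rightarrow> 'a" where
  "family_coeff k n f S T = permanent (map (vandermonde_row \<circ> f) (members_list S n T)) {1..k}"

lemma chiS_eq_conv_prod: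
  fixes f :: "nat \<Rightarrow> 'a::field"
  assumes "(-1::'a mpoly) = 1" and "K \<subseteq> {1..k}"
  shows "chiS k f A K = conv_prod (map (\<lambda>a. vector_elem (\<lambda>i. Const (vandermonde_row (f a) i))) (sorted_list_of_set A)) K"
  unfolding chiS_def
  by (rule ext_wedge_list_eq_conv_prod[OF assms(1) _ assms(2)], unfold list.rel_map, rule list.rel_refl_strong)
     (auto simp: chi_def ext_vec_def vector_elem_def vandermonde_row_def)

lemma gen_prod_eq_sum_monomials:
  fixes f :: "nat \<Rightarrow> 'a::field"
  assumes two: "(2::'a) = 0"
  shows "gen_prod k n f S {1..k}
     = (\<Sum>T\<in>Pow {1..n}. Poly_Mapping.single (subset_monomial T) (family_coeff k n f S T))"
proof -
  have neg: "(-1::'a mpoly) = 1"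
    by (rule neg_one_mpoly_char2[OF two])
  define g where "g = (\<lambda>a i. Const (vandermonde_row (f a) i) :: 'a mpoly)"
  define rows where "rows = (\<lambda>i. map (vector_elem \<circ> g) (sorted_list_of_set (S i)))"
  define L where "L = [1..<n+1]"
  have "gen_prod k n f S {1..k}
      = conv_prod (map (\<lambda>i. ext_add ext_one (ext_smult (Var i) (conv_prod (rows i)))) L) {1..k}"
    unfolding gen_prod_def L_def
    by (rule ext_wedge_list_eq_conv_prod[OF neg], unfold list.rel_map, rule list.rel_refl_strong)
       (auto simp: ext_add_def ext_smult_def rows_def g_def comp_def chiS_eq_conv_prod[OF neg])
  also have "\<dots> = (\<Sum>T\<in>Pow (set L). (\<Prod>i\<in>T. Var i) * conv_prod (map (conv_prod \<circ> rows) (filter (\<lambda>i. i \<in> T) L)) {1..k})"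
    by (subst conv_prod_one_plus_expand) (simp_all add: L_def comp_def)
  also have "\<dots> = (\<Sum>T\<in>Pow {1..n}. Poly_Mapping.single (subset_monomial T) (family_coeff k n f S T))"
  proof (rule sum.cong)
    fix T assume "T \<in> Pow {1..n}"
    then have "finite T" by (auto intro: finite_subset)
    have "conv_prod (map (conv_prod \<circ> rows) (filter (\<lambda>i. i \<in> T) L)) {1..k}
        = conv_prod (concat (map rows (filter (\<lambda>i. i \<in> T) L))) {1..k}"
      using conv_prod_concat[of "{1..k}" "map rows (filter (\<lambda>i. i \<in> T) L)"] by simp
    also have "concat (map rows (filter (\<lambda>i. i \<in> T) L)) = map vector_elem (map g (members_list S n T))"
      by (simp add: rows_def members_list_def map_concat comp_def L_def del: upt_Suc)
    also have "conv_prod \<dots> {1..k} = permanent (map g (members_list S n T)) {1..k}"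
      by (rule conv_prod_vector_elems) simp
    also have "\<dots> = Const (family_coeff k n f S T)"
      unfolding g_def family_coeff_def permanent_map_Const by (simp add: comp_def)
    finally show "(\<Prod>i\<in>T. Var i) * conv_prod (map (conv_prod \<circ> rows) (filter (\<lambda>i. i \<in> T) L)) {1..k}
        = Poly_Mapping.single (subset_monomial T) (family_coeff k n f S T)"
      by (simp add: prod_Var_eq_single[OF \<open>finite T\<close>] Const_def mult_single comp_def)
  qed (auto simp: L_def)
  finally show ?thesis .
qed

lemma distinct_concat_sorted_lists_iff:
  assumes "distinct L" "\<forall>i\<in>set L. finite (S i)"
  shows "distinct (concat (map (\<lambda>i. sorted_list_of_set (S i)) L))
     \<longleftrightarrow> (\<forall>i\<in>set L. \<forall>j\<in>set L. i \<noteq> j \<longrightarrow> S i \<inter> S j = {})"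
  using assms
proof (induction L)
  case Nil
  then show ?case by simp
next
  case (Cons a L)
  have "set (concat (map (\<lambda>i. sorted_list_of_set (S i)) L)) = (\<Union>i\<in>set L. S i)"
    using Cons.prems by auto
  with Cons show ?case
    by (auto simp: distinct_append) blast+
qed

lemma family_coeff_neq_0_iff:
  fixes f :: "nat \<Rightarrow> 'a::field"
  assumes two: "(2::'a) = 0" and S: "\<forall>i\<in>{1..n}. S i \<subseteq> {1..N}" and inj: "inj_on f {1..N}"
    and T: "T \<subseteq> {1..n}"
  shows "family_coeff k n f S T \<noteq> 0
     \<longleftrightarrow> (\<forall>i\<in>T. \<forall>j\<in>T. i \<noteq> j \<longrightarrow> S i \<inter> S j = {}) \<and> card (\<Union>i\<in>T. S i) = k"
proof -
  define A where "A = members_list S n T"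
  have fin: "\<forall>i\<in>T. finite (S i)"
    using S T by (auto intro: finite_subset)
  have filter_T: "set (filter (\<lambda>i. i \<in> T) [1..<n+1]) = T"
    using T by auto
  have set_A: "set A = (\<Union>i\<in>T. S i)"
    unfolding A_def members_list_def using fin filter_T by auto
  have fin_filter: "\<forall>i\<in>set (filter (\<lambda>i. i \<in> T) [1..<n+1]). finite (S i)"
    unfolding filter_T by (rule fin)
  have distinct_A: "distinct A \<longleftrightarrow> (\<forall>i\<in>T. \<forall>j\<in>T. i \<noteq> j \<longrightarrow> S i \<inter> S j = {})"
    using distinct_concat_sorted_lists_iff[OF distinct_filter[OF distinct_upt] fin_filter]
    unfolding A_def members_list_def filter_T .
  have coeff: "family_coeff k n f S T = permanent (map (vandermonde_row \<circ> f) A) {1..k}"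
    unfolding family_coeff_def A_def ..
  show ?thesis
  proof
    assume nz: "family_coeff k n f S T \<noteq> 0"
    have "distinct A"
    proof (rule ccontr)
      assume "\<not> distinct A"
      then obtain p q where "p < length A" "q < length A" "p \<noteq> q" "A ! p = A ! q"
        by (auto simp: distinct_conv_nth)
      then have "family_coeff k n f S T = 0"
        unfolding coeff by (intro permanent_repeated_rows_char2[OF two, of p _ q]) simp_all
      with nz show False by simp
    qed
    moreover have "length A = k"
      using nz permanent_eq_0_if_length_neq[of "map (vandermonde_row \<circ> f) A" "{1..k}"]
      unfolding coeff by auto
    ultimately show "(\<forall>i\<in>T. \<forall>j\<in>T. i \<noteq> j \<longrightarrow> S i \<inter> S j = {}) \<and> card (\<Union>i\<in>T. S i) = k"
      using distinct_A set_A distinct_card by metis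
  next
    assume "(\<forall>i\<in>T. \<forall>j\<in>T. i \<noteq> j \<longrightarrow> S i \<inter> S j = {}) \<and> card (\<Union>i\<in>T. S i) = k"
    then have "distinct A" "length A = k"
      using distinct_A set_A distinct_card by metis+
    moreover have "inj_on f (set A)"
      using inj_on_subset[OF inj] set_A S T by blast
    ultimately have "distinct (map f A)" "length (map f A) = k"
      by (simp_all add: distinct_map)
    then show "family_coeff k n f S T \<noteq> 0"
      unfolding coeff using permanent_vandermonde_neq_0_char2[OF two, of "map f A"]
      by (simp add: map_map)
  qed
qed

theorem mainTheorem11:
  fixes n N k :: nat
    and S :: "nat \<Rightarrow> nat set"
    and f :: "nat \<Rightarrow> 'a::field"
  assumes "\<forall>i\<in>{1..n}. S i \<subseteq> {1..N}"
    and "k \<ge> 1"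
    and "CHAR('a) = 2"
    and "infinite (UNIV :: 'a set) \<or> N \<le> card (UNIV :: 'a set)"
    and "inj_on f {1..N}"
  shows "(\<exists>T\<subseteq>{1..n}. (\<forall>i\<in>T. \<forall>j\<in>T. i \<noteq> j \<longrightarrow> S i \<inter> S j = {})
              \<and> card (\<Union>i\<in>T. S i) = k)
         \<longleftrightarrow> gen_prod k n f S {1..k} \<noteq> 0"
proof -
  \<comment> \<open>The bound on \<open>|F|\<close> already follows from the injectivity of \<open>f\<close>, and \<open>k = 0\<close> would be
    harmless.\<close>
  have two: "(2::'a) = 0"
    using assms(3) of_nat_CHAR[where 'a='a] by simp
  have "inj_on subset_monomial (Pow {1..n})"
    by (rule inj_on_subset[OF inj_on_subset_monomial]) (auto intro: finite_subset)
  then have "gen_prod k n f S {1..k} \<noteq> 0 \<longleftrightarrow> (\<exists>T\<in>Pow {1..n}. family_coeff k n f S T \<noteq> 0)"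
    unfolding gen_prod_eq_sum_monomials[OF two] by (subst sum_single_eq_0_iff) auto
  then show ?thesis
    using family_coeff_neq_0_iff[OF two assms(1) assms(5)] by auto
qed

end
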